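(* Let $C\subset\mathbb R^3$ be an embedded curve (closed or non-closed) with nowhere vanishing curvature, and let $F,G\in\mathcal D(|C|)$ be developable strips written in normal forms. Then $F(\Omega^+_\epsilon)\cap G(\Omega^-_\epsilon)=\emptyset$ for all sufficiently small $\epsilon>0$.
   Context: $C$ has length $l>0$ and an orientation; $-C$ is $C$ with opposite orientation. $J=[-l/2,l/2]$ if $C$ is non-closed and $J=\mathbb R/l\mathbb Z$ if $C$ is closed. $\Omega^+_\epsilon:=J\times(0,\epsilon)$, $\Omega^-_\epsilon:=J\times(-\epsilon,0)$. A developable strip along $C$ is the germ of a $C^\infty$ embedding $f(u,v)=f(u,0)+v\,\xi_f(u)$ with $\mathbf c_f(u)=f(u,0)$ parametrizing $C$, $\xi_f$ a unit vector field, and zero Gaussian curvature; with the Frenet frame $(\mathbf e,\mathbf n,\mathbf b)$ of $\mathbf c_f$ write $\xi_f=\cos\beta_f\,\mathbf e+\sin\beta_f(\cos\alpha_f\,\mathbf n+\sin\alpha_f\,\mathbf b)$. $\mathcal D(C)$: strips with $\mathbf c_f$ inducing the orientation of $C$ and $0<|\cos\alpha_f|<1$, normalized so $0<|\alpha_f|<\pi/2$, $0<\beta_f<\pi$ (hence $\xi_f\cdot\mathbf n>0$). $\mathcal D(|C|):=\mathcal D(C)\cup\mathcal D(-C)$. A normal form is such a strip $F(s,v)$ defined near $J\times\{0\}$ with $s\mapsto F(s,0)$ an arc-length parametrization of $C$ and $\partial_vF(s,0)=\xi_F(s)$. *)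

theory Defs
  imports "HOL-Analysis.Analysis"
begin

text \<open>Parameter domain J.  For a closed curve (cl = True) J = R/lZ is represented by all of R
  (all data being l-periodic); for a non-cl curve J = [-l/2, l/2].\<close>
definition Jset :: "bool \<Rightarrow> real \<Rightarrow> real set" where
  "Jset cl l = (if cl then UNIV else {-l/2..l/2})"

text \<open>A fundamental domain of J (used to express injectivity / embeddedness).\<close>
definition Jfund :: "bool \<Rightarrow> real \<Rightarrow> real set" where
  "Jfund cl l = (if cl then {-l/2..<l/2} else {-l/2..l/2})"

definition Omega_plus :: "bool \<Rightarrow> real \<Rightarrow> real \<Rightarrow> (real \<times> real) set" where
  "Omega_plus cl l \<epsilon> = {(s, v). s \<in> Jset cl l \<and> 0 < v \<and> v < \<epsilon>}"

definition Omega_minus :: "bool \<Rightarrow> real \<Rightarrow> real \<Rightarrow> (real \<times> real) set" where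
  "Omega_minus cl l \<epsilon> = {(s, v). s \<in> Jset cl l \<and> -\<epsilon> < v \<and> v < 0}"

definition smooth_on :: "real set \<Rightarrow> (real \<Rightarrow> real^3) \<Rightarrow> bool" where
  "smooth_on U f \<longleftrightarrow> (\<exists>D :: nat \<Rightarrow> real \<Rightarrow> real^3. D 0 = f \<and>
      (\<forall>k. \<forall>t\<in>U. (D k has_vector_derivative D (Suc k) t) (at t)))"

definition deriv1 :: "(real \<Rightarrow> real^3) \<Rightarrow> real \<Rightarrow> real^3" where
  "deriv1 f t = vector_derivative f (at t)"

definition deriv2 :: "(real \<Rightarrow> real^3) \<Rightarrow> real \<Rightarrow> real^3" where
  "deriv2 f t = vector_derivative (deriv1 f) (at t)"

definition frenet_e :: "(real \<Rightarrow> real^3) \<Rightarrow> real \<Rightarrow> real^3" where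
  "frenet_e c s = deriv1 c s"

definition frenet_n :: "(real \<Rightarrow> real^3) \<Rightarrow> real \<Rightarrow> real^3" where
  "frenet_n c s = (1 / norm (deriv2 c s)) *\<^sub>R deriv2 c s"

definition frenet_b :: "(real \<Rightarrow> real^3) \<Rightarrow> real \<Rightarrow> real^3" where
  "frenet_b c s = cross3 (frenet_e c s) (frenet_n c s)"

definition ruled :: "(real \<Rightarrow> real^3) \<Rightarrow> (real \<Rightarrow> real^3) \<Rightarrow> real \<times> real \<Rightarrow> real^3" where
  "ruled c \<xi> = (\<lambda>(u, v). c u + v *\<^sub>R \<xi> u)"

definition pd_u :: "(real \<times> real \<Rightarrow> real^3) \<Rightarrow> real \<times> real \<Rightarrow> real^3" where
  "pd_u f = (\<lambda>(u, v). vector_derivative (\<lambda>x. f (x, v)) (at u))"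

definition pd_v :: "(real \<times> real \<Rightarrow> real^3) \<Rightarrow> real \<times> real \<Rightarrow> real^3" where
  "pd_v f = (\<lambda>(u, v). vector_derivative (\<lambda>y. f (u, y)) (at v))"

definition gauss_curv :: "(real \<times> real \<Rightarrow> real^3) \<Rightarrow> real \<times> real \<Rightarrow> real" where
  "gauss_curv f p =
     (let fu = pd_u f p; fv = pd_v f p;
          fuu = pd_u (pd_u f) p; fuv = pd_v (pd_u f) p; fvv = pd_v (pd_v f) p;
          \<nu> = (1 / norm (cross3 fu fv)) *\<^sub>R cross3 fu fv;
          E = fu \<bullet> fu; F = fu \<bullet> fv; G = fv \<bullet> fv;
          L = fuu \<bullet> \<nu>; M = fuv \<bullet> \<nu>; N = fvv \<bullet> \<nu>
      in (L * N - M\<^sup>2) / (E * G - F\<^sup>2))"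

definition embedded_curve :: "bool \<Rightarrow> real \<Rightarrow> (real \<Rightarrow> real^3) \<Rightarrow> bool" where
  "embedded_curve cl l \<gamma> \<longleftrightarrow>
     0 < l \<and>
     (\<exists>U. open U \<and> Jset cl l \<subseteq> U \<and> smooth_on U \<gamma>) \<and>
     (cl \<longrightarrow> (\<forall>s. \<gamma> (s + l) = \<gamma> s)) \<and>
     (\<forall>s\<in>Jset cl l. norm (deriv1 \<gamma> s) = 1) \<and>
     (\<forall>s\<in>Jset cl l. deriv2 \<gamma> s \<noteq> 0) \<and>
     inj_on \<gamma> (Jfund cl l)"

text \<open>Germ of an embedding near J x {0}: an injective immersion on an open
  neighbourhood W of J x {0} (injective modulo the period for cl curves).\<close>
definition strip_embedding_on ::
  "bool \<Rightarrow> real \<Rightarrow> (real \<times> real \<Rightarrow> real^3) \<Rightarrow> (real \<times> real) set \<Rightarrow> bool" where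
  "strip_embedding_on cl l f W \<longleftrightarrow>
     open W \<and> {(s, 0) | s. s \<in> Jset cl l} \<subseteq> W \<and>
     (\<forall>p\<in>W. cross3 (pd_u f p) (pd_v f p) \<noteq> 0) \<and>
     (\<forall>p\<in>W. \<forall>q\<in>W. f p = f q \<longrightarrow> snd p = snd q \<and>
        (if cl then (\<exists>k::int. fst q = fst p + of_int k * l) else fst p = fst q))"

text \<open>Normal form F(s,v) = c(s) + v xi(s) of a developable strip in D(|C|):
  c is an arc-length parametrisation of C (either orientation, with a shift of
  the parameter allowed for cl C), xi is a unit vector field, F is (the germ
  of) a smooth embedding with zero Gaussian curvature, and
  xi = cos beta e + sin beta (cos alpha n + sin alpha b) with respect to the
  Frenet frame of c, where 0 < |alpha| < pi/2 and 0 < beta < pi.\<close>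
definition normal_form_strip ::
  "bool \<Rightarrow> real \<Rightarrow> (real \<Rightarrow> real^3) \<Rightarrow> (real \<Rightarrow> real^3) \<Rightarrow> (real \<Rightarrow> real^3) \<Rightarrow> bool" where
  "normal_form_strip cl l \<gamma> c \<xi> \<longleftrightarrow>
     (\<exists>\<sigma> a::real. (\<sigma> = 1 \<or> \<sigma> = -1) \<and> (\<not> cl \<longrightarrow> a = 0) \<and>
        (\<forall>s\<in>Jset cl l. c s = \<gamma> (\<sigma> * s + a))) \<and>
     (cl \<longrightarrow> (\<forall>s. c (s + l) = c s \<and> \<xi> (s + l) = \<xi> s)) \<and>
     (\<exists>U. open U \<and> Jset cl l \<subseteq> U \<and> smooth_on U c \<and> smooth_on U \<xi>) \<and>
     (\<forall>s\<in>Jset cl l. norm (\<xi> s) = 1) \<and>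
     (\<exists>W. strip_embedding_on cl l (ruled c \<xi>) W \<and>
        (\<forall>p\<in>W. gauss_curv (ruled c \<xi>) p = 0)) \<and>
     (\<exists>\<alpha> \<beta> :: real \<Rightarrow> real. \<forall>s\<in>Jset cl l.
        \<xi> s = cos (\<beta> s) *\<^sub>R frenet_e c s
               + sin (\<beta> s) *\<^sub>R (cos (\<alpha> s) *\<^sub>R frenet_n c s + sin (\<alpha> s) *\<^sub>R frenet_b c s) \<and>
        0 < \<bar>\<alpha> s\<bar> \<and> \<bar>\<alpha> s\<bar> < pi / 2 \<and> 0 < \<beta> s \<and> \<beta> s < pi)"

end

(* Along C both rulings lean towards the principal normal n of C: in the Frenet frame
   xi . n = sin beta cos alpha, which is bounded below by some delta > 0 by compactness
   (periodicity in the closed case).  Suppose F(s, v) = G(s', w) with 0 < v < eps and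
   -eps < w < 0.  Embeddedness and compactness force the base points to have nearby
   parameters (modulo the period), and then the normal component of
   gamma(s') - gamma(s) = v xi_F(s) - w xi_G(s') is at least (v - w) delta/2 by the offsets,
   but at most O((v - w)^2) by Taylor's formula; this is impossible once eps is small. *)
theory Submission
  imports Defs
begin

lemma compact_pos_lower_bound:
  fixes q :: "'a::topological_space \<Rightarrow> real"
  assumes "compact K" "continuous_on K q" "\<And>x. x \<in> K \<Longrightarrow> 0 < q x"
  shows "\<exists>\<delta>>0. \<forall>x\<in>K. \<delta> \<le> q x"
proof (cases "K = {}")
  case False
  then obtain x0 where "x0 \<in> K" "\<forall>x\<in>K. q x0 \<le> q x"
    using continuous_attains_inf[OF assms(1) _ assms(2)] by blast
  then show ?thesis using assms(3) by blast
qed (use zero_less_one in blast)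

lemma periodic_shift_int:
  assumes "\<And>t. f (t + l) = f t"
  shows "f (t + of_int k * l) = f t"
proof (induction k arbitrary: t rule: int_induct[where k = 0])
  case (step1 i)
  then show ?case using assms[of "t + of_int i * l"] by (simp add: algebra_simps)
next
  case (step2 i)
  then show ?case using assms[of "t + of_int (i - 1) * l"] by (simp add: algebra_simps)
qed simp

lemma periodic_has_vector_derivative:
  fixes f :: "real \<Rightarrow> 'b::real_normed_vector"
  assumes "\<And>t. f (t + l) = f t" "\<And>t. (f has_vector_derivative f' t) (at t)"
  shows "f' (t + l) = f' t"
proof -
  have shift: "((\<lambda>x. x + l) has_vector_derivative 1) (at t)"
    by (auto intro!: derivative_eq_intros)
  have "((\<lambda>x. f (x + l)) has_vector_derivative f' (t + l)) (at t)"
    using vector_diff_chain_at[OF shift, of f "f' (t + l)"] assms(2) by (simp add: o_def)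
  then have "(f has_vector_derivative f' (t + l)) (at t)"
    using assms(1) by simp
  then show ?thesis
    using assms(2) vector_derivative_unique_at by blast
qed

lemma vector_mean_value_bound:
  fixes f f' :: "real \<Rightarrow> 'a::real_normed_vector"
  assumes "convex S" "\<And>x. x \<in> S \<Longrightarrow> (f has_vector_derivative f' x) (at x)"
    "\<And>x. x \<in> S \<Longrightarrow> norm (f' x) \<le> B" "x \<in> S" "y \<in> S"
  shows "norm (f x - f y) \<le> B * \<bar>x - y\<bar>"
proof -
  have onorm: "onorm (\<lambda>h. h *\<^sub>R f' x) = norm (f' x)" for x
    using onorm_scaleR_left[OF bounded_linear_ident, of "f' x"] onorm_id[where 'a=real] by simp
  have "norm (f x - f y) \<le> B * norm (x - y)"
  proof (rule differentiable_bound[OF assms(1) _ _ assms(4,5), where f' = "\<lambda>x h. h *\<^sub>R f' x"])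
    show "(f has_derivative (\<lambda>h. h *\<^sub>R f' x)) (at x within S)" if "x \<in> S" for x
      using assms(2)[OF that] by (simp add: has_vector_derivative_def has_derivative_at_withinI)
    show "onorm (\<lambda>h. h *\<^sub>R f' x) \<le> B" if "x \<in> S" for x
      using assms(3)[OF that] by (simp add: onorm)
  qed
  then show ?thesis by simp
qed

lemma second_order_taylor_bound:
  fixes f f' f'' :: "real \<Rightarrow> 'a::real_normed_vector"
  assumes S: "convex S" "a \<in> S" "b \<in> S"
    and f': "\<And>t. t \<in> S \<Longrightarrow> (f has_vector_derivative f' t) (at t)"
    and f'': "\<And>t. t \<in> S \<Longrightarrow> (f' has_vector_derivative f'' t) (at t)"
    and M: "\<And>t. t \<in> S \<Longrightarrow> norm (f'' t) \<le> M"
  shows "norm (f b - f a - (b - a) *\<^sub>R f' a) \<le> M * (b - a)\<^sup>2"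
proof -
  let ?I = "closed_segment a b"
  have I: "?I \<subseteq> S" using closed_segment_subset S by blast
  have "M \<ge> 0" using M[OF S(2)] norm_ge_zero order_trans by blast
  have f'_lipschitz: "norm (f' x - f' a) \<le> M * \<bar>b - a\<bar>" if x: "x \<in> ?I" for x
  proof -
    have "norm (f' x - f' a) \<le> M * \<bar>x - a\<bar>"
      by (rule vector_mean_value_bound[OF convex_closed_segment _ _ x])
        (use I f'' M in auto)
    also have "\<dots> \<le> M * \<bar>b - a\<bar>"
      using mult_left_mono[OF segment_bound1[OF x] \<open>M \<ge> 0\<close>] by simp
    finally show ?thesis .
  qed
  have "norm (f b - f a - (b - a) *\<^sub>R f' a) \<le> norm (b - a) * (M * \<bar>b - a\<bar>)"
  proof (rule vector_differentiable_bound_linearization[where S = ?I])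
    show "(f has_vector_derivative f' x) (at x within ?I)" if "x \<in> ?I" for x
      using f' I that by (blast intro: has_vector_derivative_at_within)
  qed (use f'_lipschitz in auto)
  then show ?thesis by (simp add: power2_eq_square abs_mult_self_eq mult_ac)
qed

lemma has_vector_derivative_unique_on_regular_closed:
  fixes f g :: "real \<Rightarrow> 'a::real_normed_vector"
  assumes S: "closure (interior S) = S"
    and f: "\<And>x. x \<in> S \<Longrightarrow> (f has_vector_derivative f' x) (at x)" "continuous_on S f'"
    and g: "\<And>x. x \<in> S \<Longrightarrow> (g has_vector_derivative g' x) (at x)" "continuous_on S g'"
    and eq: "\<And>x. x \<in> S \<Longrightarrow> f x = g x" and x: "x \<in> S"
  shows "f' x = g' x"
proof -
  have "f' y - g' y = 0" if y: "y \<in> interior S" for y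
  proof -
    have yS: "y \<in> S" using y interior_subset by blast
    have "((\<lambda>x. f x - g x) has_vector_derivative f' y - g' y) (at y)"
      using f(1)[OF yS] g(1)[OF yS] by (rule derivative_intros)
    moreover have "((\<lambda>x. f x - g x) has_vector_derivative 0) (at y)"
      by (rule has_vector_derivative_transform_within_open[OF _ open_interior y, of "\<lambda>_. 0"])
        (use eq interior_subset in auto)
    ultimately show ?thesis using vector_derivative_unique_at by blast
  qed
  moreover have "continuous_on (closure (interior S)) (\<lambda>y. f' y - g' y)"
    using S f(2) g(2) by (auto intro!: continuous_intros)
  ultimately have "f' x - g' x = 0"
    using continuous_constant_on_closure[of "interior S"] S x by blast
  then show ?thesis by simp
qed

lemma frenet_combination_inner_normal_pos:
  fixes e n :: "real^3"
  assumes "e \<bullet> n = 0" "norm n = 1"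
    and "0 < \<bar>\<alpha>\<bar>" "\<bar>\<alpha>\<bar> < pi / 2" "0 < \<beta>" "\<beta> < pi"
  shows "(cos \<beta> *\<^sub>R e + sin \<beta> *\<^sub>R (cos \<alpha> *\<^sub>R n + sin \<alpha> *\<^sub>R cross3 e n)) \<bullet> n > 0"
proof -
  have "n \<bullet> n = 1" using assms(2) by (simp add: norm_eq_1)
  then have "(cos \<beta> *\<^sub>R e + sin \<beta> *\<^sub>R (cos \<alpha> *\<^sub>R n + sin \<alpha> *\<^sub>R cross3 e n)) \<bullet> n = sin \<beta> * cos \<alpha>"
    using assms(1) by (simp add: inner_add_left dot_cross_self)
  moreover have "sin \<beta> > 0" using assms(5,6) by (simp add: sin_gt_zero)
  moreover have "cos \<alpha> > 0" using assms(3,4) by (intro cos_gt_zero_pi) auto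
  ultimately show ?thesis by simp
qed

lemma Icc_subset_Jset: "{-l/2..l/2} \<subseteq> Jset cl l"
  by (auto simp: Jset_def)

lemma closure_interior_Jset: "0 < l \<Longrightarrow> closure (interior (Jset cl l)) = Jset cl l"
  by (simp add: Jset_def)

lemma affine_reparam_in_Jset:
  "\<sigma> = 1 \<or> \<sigma> = -1 \<Longrightarrow> (\<not> cl \<longrightarrow> a = 0) \<Longrightarrow> s \<in> Jset cl l \<Longrightarrow> \<sigma> * s + a \<in> Jset cl l"
  by (auto simp: Jset_def)

lemma Jset_periodic_representative:
  assumes l: "0 < l" and s: "s \<in> Jset cl l" and per: "cl \<Longrightarrow> \<forall>t. f (t + l) = f t"
  shows "\<exists>u\<in>{-l/2..l/2}. f u = f s"
proof (cases cl)
  case True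
  define k where "k = \<lfloor>(s + l/2) / l\<rfloor>"
  have "of_int k \<le> (s + l/2) / l" "(s + l/2) / l < of_int k + 1"
    unfolding k_def by linarith+
  then have "s - of_int k * l \<in> {-l/2..l/2}"
    using l by (auto simp: field_simps)
  moreover have "f (s + of_int (-k) * l) = f s"
    using periodic_shift_int per True by blast
  ultimately show ?thesis by (intro bexI[of _ "s - of_int k * l"]) auto
qed (use s in \<open>auto simp: Jset_def\<close>)

lemma Jset_uniform_lower_bound:
  fixes q :: "real \<Rightarrow> real"
  assumes "0 < l" "continuous_on (Jset cl l) q" "\<And>s. s \<in> Jset cl l \<Longrightarrow> 0 < q s"
    and "cl \<Longrightarrow> \<forall>t. q (t + l) = q t"
  shows "\<exists>\<delta>>0. \<forall>s\<in>Jset cl l. \<delta> \<le> q s"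
proof -
  obtain \<delta> where "\<delta> > 0" "\<forall>u\<in>{-l/2..l/2}. \<delta> \<le> q u"
    using compact_pos_lower_bound[OF compact_Icc continuous_on_subset[OF assms(2) Icc_subset_Jset]]
      assms(3) Icc_subset_Jset by blast
  then show ?thesis
    using Jset_periodic_representative[OF assms(1) _ assms(4)] by metis
qed

lemma smooth_on_continuous_on:
  assumes "smooth_on U f"
  shows "continuous_on U f"
proof -
  obtain D where "D 0 = f" "\<And>t. t \<in> U \<Longrightarrow> (D 0 has_vector_derivative D (Suc 0) t) (at t)"
    using assms unfolding smooth_on_def by blast
  then show ?thesis
    by (metis continuous_at_imp_continuous_on has_vector_derivative_continuous)
qed

lemma smooth_on_derivatives:
  assumes "smooth_on U f" "open U"
  obtains f' f'' where
    "\<And>t. t \<in> U \<Longrightarrow> (f has_vector_derivative f' t) (at t)"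
    "\<And>t. t \<in> U \<Longrightarrow> (f' has_vector_derivative f'' t) (at t)"
    "continuous_on U f'" "continuous_on U f''"
    "\<And>t. t \<in> U \<Longrightarrow> deriv1 f t = f' t" "\<And>t. t \<in> U \<Longrightarrow> deriv2 f t = f'' t"
proof -
  obtain D where D0: "D 0 = f"
    and D: "\<And>k t. t \<in> U \<Longrightarrow> (D k has_vector_derivative D (Suc k) t) (at t)"
    using assms(1) unfolding smooth_on_def by blast
  have cont: "continuous_on U (D k)" for k
    using D by (meson continuous_at_imp_continuous_on has_vector_derivative_continuous)
  have d1: "deriv1 f t = D 1 t" if "t \<in> U" for t
    using D[OF that, of 0] D0 by (simp add: deriv1_def vector_derivative_at)
  have d2: "deriv2 f t = D 2 t" if "t \<in> U" for t
  proof -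
    have "(deriv1 f has_vector_derivative D 2 t) (at t)"
      using D[OF that, of 1] d1
      by (auto simp: numeral_2_eq_2 intro: has_vector_derivative_transform_within_open[OF _ assms(2) that])
    then show ?thesis by (simp add: deriv2_def vector_derivative_at)
  qed
  show ?thesis
    using that[of "D 1" "D 2"] D[of _ 0] D[of _ 1] D0 cont d1 d2 by (simp add: numeral_2_eq_2)
qed

lemma inner_lower_bound_perturb:
  fixes Y n n' :: "'a::real_inner"
  assumes "norm Y = 1" "dist n' n < \<eta>" "\<delta> \<le> Y \<bullet> n'"
  shows "\<delta> - \<eta> \<le> Y \<bullet> n"
proof -
  have "Y \<bullet> (n' - n) \<le> norm Y * norm (n' - n)" by (rule norm_cauchy_schwarz)
  then show ?thesis using assms by (simp add: dist_norm inner_diff_right)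
qed

lemma chord_length_lower_bound:
  fixes f f' f'' :: "real \<Rightarrow> 'a::real_normed_vector"
  assumes S: "convex S" "a \<in> S" "b \<in> S"
    and f': "\<And>t. t \<in> S \<Longrightarrow> (f has_vector_derivative f' t) (at t)"
    and f'': "\<And>t. t \<in> S \<Longrightarrow> (f' has_vector_derivative f'' t) (at t)"
    and M: "\<And>t. t \<in> S \<Longrightarrow> norm (f'' t) \<le> M" "0 < M"
    and ab: "\<bar>b - a\<bar> \<le> 1 / (2 * M)" and unit: "norm (f' a) = 1"
  shows "\<bar>b - a\<bar> \<le> 2 * norm (f b - f a)"
proof -
  have "norm (f b - f a - (b - a) *\<^sub>R f' a) \<le> M * (b - a)\<^sup>2"
    by (rule second_order_taylor_bound[OF S f' f'' M(1)])
  also have "\<dots> = (M * \<bar>b - a\<bar>) * \<bar>b - a\<bar>"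
    by (simp add: power2_eq_square abs_mult_self_eq)
  also have "\<dots> \<le> \<bar>b - a\<bar> / 2"
    using mult_right_mono[of "M * \<bar>b - a\<bar>" "1/2" "\<bar>b - a\<bar>"] ab M(2) by (simp add: field_simps)
  finally have "norm (f b - f a - (b - a) *\<^sub>R f' a) \<le> \<bar>b - a\<bar> / 2" .
  moreover have "\<bar>b - a\<bar> \<le> norm (f b - f a) + norm (f b - f a - (b - a) *\<^sub>R f' a)"
    using norm_triangle_ineq4[of "f b - f a" "f b - f a - (b - a) *\<^sub>R f' a"] unit by simp
  ultimately show ?thesis by argo
qed

(* Project onto n: the offsets separate the two points by at least (v - w) delta/2 in direction n,
   whereas f b - f a is tangent to first order, so its n-component is O((b - a)^2) = O((v - w)^2). *)
lemma offsets_towards_normal_differ: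
  fixes f f' f'' :: "real \<Rightarrow> 'a::real_inner"
  assumes S: "convex S" "a \<in> S" "b \<in> S"
    and f': "\<And>t. t \<in> S \<Longrightarrow> (f has_vector_derivative f' t) (at t)"
    and f'': "\<And>t. t \<in> S \<Longrightarrow> (f' has_vector_derivative f'' t) (at t)"
    and M: "\<And>t. t \<in> S \<Longrightarrow> norm (f'' t) \<le> M" "0 < M"
    and ab: "\<bar>b - a\<bar> \<le> 1 / (2 * M)"
    and n: "norm (f' a) = 1" "f' a \<bullet> n = 0" "norm n = 1"
    and X: "norm X = 1" "\<delta> \<le> X \<bullet> n"
    and Y: "norm Y = 1" "\<delta> / 2 \<le> Y \<bullet> n"
    and v: "0 < v" "v < \<epsilon>" and w: "-\<epsilon> < w" "w < 0"
    and small: "16 * M * \<epsilon> \<le> \<delta>"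
  shows "f a + v *\<^sub>R X \<noteq> f b + w *\<^sub>R Y"
proof
  assume "f a + v *\<^sub>R X = f b + w *\<^sub>R Y"
  then have d: "f b - f a = v *\<^sub>R X - w *\<^sub>R Y"
    by (simp add: algebra_simps)
  define m where "m = v - w"
  have "0 < \<delta>"
    using small M(2) v mult_pos_pos[of "16 * M" \<epsilon>] by linarith
  have "norm (f b - f a) \<le> m"
    using norm_triangle_ineq4[of "v *\<^sub>R X" "w *\<^sub>R Y"] X Y v w unfolding d m_def by simp
  then have "\<bar>b - a\<bar> \<le> 2 * m"
    using chord_length_lower_bound[OF S f' f'' M ab n(1)] by linarith
  then have "(b - a)\<^sup>2 \<le> (2 * m)\<^sup>2"
    using abs_le_square_iff[of "b - a" "2 * m"] v w unfolding m_def by simp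
  have "(f b - f a) \<bullet> n = (f b - f a - (b - a) *\<^sub>R f' a) \<bullet> n"
    using n(2) by (simp add: inner_diff_left)
  also have "\<dots> \<le> norm (f b - f a - (b - a) *\<^sub>R f' a)"
    using norm_cauchy_schwarz[of _ n] n(3) by simp
  also have "\<dots> \<le> M * (b - a)\<^sup>2"
    by (rule second_order_taylor_bound[OF S f' f'' M(1)])
  also have "\<dots> \<le> M * (2 * m)\<^sup>2"
    using \<open>(b - a)\<^sup>2 \<le> (2 * m)\<^sup>2\<close> M(2) by simp
  finally have upper: "(f b - f a) \<bullet> n \<le> m * (4 * M * m)"
    by (simp add: power2_eq_square algebra_simps)
  have "v * (\<delta> / 2) \<le> v * (X \<bullet> n)" "(- w) * (\<delta> / 2) \<le> (- w) * (Y \<bullet> n)"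
    using X Y v w \<open>0 < \<delta>\<close> by (auto intro!: mult_left_mono)
  moreover have "(f b - f a) \<bullet> n = v * (X \<bullet> n) + (- w) * (Y \<bullet> n)"
    unfolding d by (simp add: inner_diff_left)
  moreover have "m * (\<delta> / 2) = v * (\<delta> / 2) + (- w) * (\<delta> / 2)"
    unfolding m_def by (simp add: field_simps)
  ultimately have "m * (\<delta> / 2) \<le> m * (4 * M * m)"
    using upper by linarith
  then have "\<delta> \<le> 8 * M * m"
    using v w unfolding m_def by simp
  also have "\<dots> < 16 * M * \<epsilon>"
    using M(2) v w unfolding m_def by simp
  finally show False using small by simp
qed

locale arclength_curve =
  fixes cl :: bool and l :: real and \<gamma> \<gamma>' \<gamma>'' :: "real \<Rightarrow> real^3"
  assumes length_pos: "0 < l"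
    and has_derivative_\<gamma>: "\<And>t. t \<in> Jset cl l \<Longrightarrow> (\<gamma> has_vector_derivative \<gamma>' t) (at t)"
    and has_derivative_\<gamma>': "\<And>t. t \<in> Jset cl l \<Longrightarrow> (\<gamma>' has_vector_derivative \<gamma>'' t) (at t)"
    and continuous_\<gamma>'': "continuous_on (Jset cl l) \<gamma>''"
    and unit_speed: "\<And>t. t \<in> Jset cl l \<Longrightarrow> norm (\<gamma>' t) = 1"
    and curvature_nonzero: "\<And>t. t \<in> Jset cl l \<Longrightarrow> \<gamma>'' t \<noteq> 0"
    and periodic: "cl \<Longrightarrow> \<gamma> (t + l) = \<gamma> t"
    and inj_on_Jfund: "inj_on \<gamma> (Jfund cl l)"
begin

abbreviation J where "J \<equiv> Jset cl l"

definition normal :: "real \<Rightarrow> real^3" where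
  "normal t = sgn (\<gamma>'' t)"

lemma continuous_\<gamma>: "continuous_on J \<gamma>"
  using has_derivative_\<gamma>
  by (meson continuous_at_imp_continuous_on has_vector_derivative_continuous)

lemma continuous_\<gamma>': "continuous_on J \<gamma>'"
  using has_derivative_\<gamma>'
  by (meson continuous_at_imp_continuous_on has_vector_derivative_continuous)

lemma continuous_normal: "continuous_on J normal"
  unfolding normal_def using continuous_\<gamma>'' curvature_nonzero by (intro continuous_intros) auto

lemma norm_normal: "t \<in> J \<Longrightarrow> norm (normal t) = 1"
  using curvature_nonzero by (simp add: normal_def norm_sgn)

lemma periodic_normal:
  assumes "cl" shows "normal (t + l) = normal t"
proof -
  have J: "J = UNIV" using assms by (simp add: Jset_def)
  have "\<gamma>' (t + l) = \<gamma>' t" for t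
    by (rule periodic_has_vector_derivative[where f = \<gamma>, OF periodic[OF assms]])
      (use has_derivative_\<gamma> J in simp)
  then have "\<gamma>'' (t + l) = \<gamma>'' t"
    by (rule periodic_has_vector_derivative) (use has_derivative_\<gamma>' J in simp)
  then show ?thesis by (simp add: normal_def)
qed

lemma tangent_orthogonal_normal:
  assumes "t \<in> J" shows "\<gamma>' t \<bullet> normal t = 0"
proof -
  let ?d = "\<lambda>s. \<gamma>' s \<bullet> \<gamma>'' s + \<gamma>'' s \<bullet> \<gamma>' s"
  have deriv: "((\<lambda>s. \<gamma>' s \<bullet> \<gamma>' s) has_vector_derivative ?d s) (at s)" if "s \<in> J" for s
    by (rule bounded_bilinear.has_vector_derivative
        [OF bounded_bilinear_inner has_derivative_\<gamma>'[OF that] has_derivative_\<gamma>'[OF that]])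
  have cont: "continuous_on J ?d"
    using continuous_\<gamma>' continuous_\<gamma>'' by (intro continuous_intros)
  have const: "\<gamma>' s \<bullet> \<gamma>' s = 1" if "s \<in> J" for s
    using unit_speed[OF that] by (simp add: norm_eq_1)
  have "?d t = 0"
    using has_vector_derivative_unique_on_regular_closed[OF closure_interior_Jset[OF length_pos]
        deriv cont has_vector_derivative_const continuous_on_const const assms] .
  then show ?thesis by (simp add: normal_def sgn_div_norm inner_commute)
qed

lemma periodic_representative:
  assumes "t \<in> J" shows "\<exists>u\<in>{-l/2..l/2}. \<gamma> u = \<gamma> t \<and> normal u = normal t"
proof -
  have "cl \<Longrightarrow> \<forall>s. (\<gamma> (s + l), normal (s + l)) = (\<gamma> s, normal s)"
    using periodic periodic_normal by simp
  then show ?thesis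
    using Jset_periodic_representative[OF length_pos assms, of "\<lambda>t. (\<gamma> t, normal t)"] by simp
qed

(* A compact interval containing [-l/2, l/2] and, for closed curves, its translates by l and -l. *)
definition window :: "real set" where
  "window = (if cl then {-2*l..2*l} else {-l/2..l/2})"

lemma window_subset_J: "window \<subseteq> J"
  by (auto simp: window_def Jset_def)

lemma convex_window: "convex window" and compact_window: "compact window"
  by (auto simp: window_def)

lemma Icc_subset_window: "{-l/2..l/2} \<subseteq> window"
  using length_pos by (auto simp: window_def)

lemma shift_in_window: "cl \<Longrightarrow> u \<in> {-l/2..l/2} \<Longrightarrow> u + l \<in> window \<and> u - l \<in> window"
  using length_pos unfolding window_def by auto

lemma curvature_bounded_on_window: "\<exists>M>0. \<forall>t\<in>window. norm (\<gamma>'' t) \<le> M"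
  using compact_imp_bounded[OF compact_continuous_image
      [OF continuous_on_subset[OF continuous_\<gamma>'' window_subset_J] compact_window]]
  unfolding bounded_pos by auto

lemma injective_modulo_period:
  assumes "a \<in> {-l/2..l/2}" "b \<in> {-l/2..l/2}" "\<gamma> a = \<gamma> b"
  shows "a = b \<or> (cl \<and> \<bar>a - b\<bar> = l)"
proof (cases cl)
  case False
  then show ?thesis using inj_on_Jfund assms by (auto simp: Jfund_def inj_on_def)
next
  case True
  \<comment> \<open>On a closed curve the two endpoints of the interval are the same point of the curve.\<close>
  define a' where "a' = (if a = l/2 then -l/2 else a)"
  define b' where "b' = (if b = l/2 then -l/2 else b)"
  have "\<gamma> (l/2) = \<gamma> (-l/2)" using periodic[OF True, of "-l/2"] by simp
  then have "a' \<in> Jfund cl l" "b' \<in> Jfund cl l" "\<gamma> a' = \<gamma> b'"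
    using assms True length_pos by (auto simp: a'_def b'_def Jfund_def)
  then have "a' = b'" using inj_on_Jfund by (auto simp: inj_on_def)
  then show ?thesis using True assms length_pos unfolding a'_def b'_def by (auto split: if_splits)
qed

lemma far_parameters_separated:
  assumes "0 < r"
  shows "\<exists>\<epsilon>>0. \<forall>a\<in>{-l/2..l/2}. \<forall>b\<in>{-l/2..l/2}.
           r \<le> \<bar>a - b\<bar> \<and> (cl \<longrightarrow> r \<le> \<bar>a - b - l\<bar> \<and> r \<le> \<bar>a - b + l\<bar>) \<longrightarrow> \<epsilon> \<le> dist (\<gamma> a) (\<gamma> b)"
proof -
  let ?I = "{-l/2..l/2}"
  define far where "far p \<longleftrightarrow> r \<le> \<bar>fst p - snd p\<bar> \<and>
      (cl \<longrightarrow> r \<le> \<bar>fst p - snd p - l\<bar> \<and> r \<le> \<bar>fst p - snd p + l\<bar>)" for p :: "real \<times> real"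
  let ?P = "(?I \<times> ?I) \<inter> Collect far"
  have "closed (Collect far)"
    unfolding far_def by (cases cl) (auto intro!: closed_Collect_conj closed_Collect_le continuous_intros)
  then have "compact ?P" by (intro compact_Int_closed compact_Times compact_Icc)
  moreover have "continuous_on ?P (\<lambda>p. dist (\<gamma> (fst p)) (\<gamma> (snd p)))"
  proof -
    note cont = continuous_on_subset[OF continuous_\<gamma> Icc_subset_Jset]
    have "continuous_on ?P (\<lambda>p. \<gamma> (fst p))" "continuous_on ?P (\<lambda>p. \<gamma> (snd p))"
      by (rule continuous_on_compose2[OF cont continuous_on_fst[OF continuous_on_id]]
          continuous_on_compose2[OF cont continuous_on_snd[OF continuous_on_id]]; force)+
    then show ?thesis by (intro continuous_intros)
  qed
  moreover have "0 < dist (\<gamma> (fst p)) (\<gamma> (snd p))" if "p \<in> ?P" for p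
    using that injective_modulo_period[of "fst p" "snd p"] assms by (auto simp: far_def)
  ultimately obtain \<epsilon> where "\<epsilon> > 0" and sep: "\<forall>p\<in>?P. \<epsilon> \<le> dist (\<gamma> (fst p)) (\<gamma> (snd p))"
    using compact_pos_lower_bound by blast
  show ?thesis
  proof (intro exI[of _ \<epsilon>] conjI \<open>\<epsilon> > 0\<close> ballI impI)
    fix a b assume "a \<in> ?I" "b \<in> ?I"
      and "r \<le> \<bar>a - b\<bar> \<and> (cl \<longrightarrow> r \<le> \<bar>a - b - l\<bar> \<and> r \<le> \<bar>a - b + l\<bar>)"
    then have "(a, b) \<in> ?P" by (simp add: far_def)
    from bspec[OF sep this] show "\<epsilon> \<le> dist (\<gamma> a) (\<gamma> b)" by simp
  qed
qed

lemma close_points_close_parameters: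
  assumes "0 < r"
  shows "\<exists>\<epsilon>>0. \<forall>a\<in>{-l/2..l/2}. \<forall>b\<in>{-l/2..l/2}. dist (\<gamma> a) (\<gamma> b) < \<epsilon> \<longrightarrow>
           (\<exists>b'\<in>window. \<bar>b' - a\<bar> < r \<and> \<gamma> b' = \<gamma> b \<and> normal b' = normal b)"
proof -
  obtain \<epsilon> where "\<epsilon> > 0" and \<epsilon>: "\<forall>a\<in>{-l/2..l/2}. \<forall>b\<in>{-l/2..l/2}.
      r \<le> \<bar>a - b\<bar> \<and> (cl \<longrightarrow> r \<le> \<bar>a - b - l\<bar> \<and> r \<le> \<bar>a - b + l\<bar>) \<longrightarrow> \<epsilon> \<le> dist (\<gamma> a) (\<gamma> b)"
    using far_parameters_separated[OF assms] by blast
  have "\<exists>b'\<in>window. \<bar>b' - a\<bar> < r \<and> \<gamma> b' = \<gamma> b \<and> normal b' = normal b"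
    if ab: "a \<in> {-l/2..l/2}" "b \<in> {-l/2..l/2}" "dist (\<gamma> a) (\<gamma> b) < \<epsilon>" for a b
  proof -
    consider "\<bar>b - a\<bar> < r" | "cl" "\<bar>(b + l) - a\<bar> < r" | "cl" "\<bar>(b - l) - a\<bar> < r"
      using \<epsilon> ab by fastforce
    then show ?thesis
    proof cases
      case 1
      then show ?thesis using ab Icc_subset_window by blast
    next
      case 2
      then show ?thesis using ab shift_in_window periodic periodic_normal by blast
    next
      case 3
      moreover have "\<gamma> (b - l) = \<gamma> b" "normal (b - l) = normal b"
        using periodic[OF \<open>cl\<close>, of "b - l"] periodic_normal[OF \<open>cl\<close>, of "b - l"] by simp_all
      ultimately show ?thesis using ab shift_in_window by blast
    qed
  qed
  then show ?thesis using \<open>\<epsilon> > 0\<close> by blast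
qed

lemma close_points_nearby_representatives:
  assumes "0 < r"
  shows "\<exists>\<epsilon>>0. \<forall>t1\<in>J. \<forall>t2\<in>J. dist (\<gamma> t1) (\<gamma> t2) < \<epsilon> \<longrightarrow>
           (\<exists>u1\<in>window. \<exists>u2\<in>window. \<bar>u2 - u1\<bar> < r \<and>
              \<gamma> u1 = \<gamma> t1 \<and> normal u1 = normal t1 \<and> \<gamma> u2 = \<gamma> t2 \<and> normal u2 = normal t2)"
proof -
  obtain \<epsilon> where "0 < \<epsilon>" and \<epsilon>: "\<forall>a\<in>{-l/2..l/2}. \<forall>b\<in>{-l/2..l/2}. dist (\<gamma> a) (\<gamma> b) < \<epsilon> \<longrightarrow>
      (\<exists>b'\<in>window. \<bar>b' - a\<bar> < r \<and> \<gamma> b' = \<gamma> b \<and> normal b' = normal b)"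
    using close_points_close_parameters[OF assms] by blast
  have "\<exists>u1\<in>window. \<exists>u2\<in>window. \<bar>u2 - u1\<bar> < r \<and>
      \<gamma> u1 = \<gamma> t1 \<and> normal u1 = normal t1 \<and> \<gamma> u2 = \<gamma> t2 \<and> normal u2 = normal t2"
    if t: "t1 \<in> J" "t2 \<in> J" "dist (\<gamma> t1) (\<gamma> t2) < \<epsilon>" for t1 t2
  proof -
    obtain u1 u2 where u: "u1 \<in> {-l/2..l/2}" "\<gamma> u1 = \<gamma> t1" "normal u1 = normal t1"
      "u2 \<in> {-l/2..l/2}" "\<gamma> u2 = \<gamma> t2" "normal u2 = normal t2"
      using periodic_representative t(1,2) by metis
    moreover have "dist (\<gamma> u1) (\<gamma> u2) < \<epsilon>" using u t(3) by simp
    ultimately obtain u2' where "u2' \<in> window" "\<bar>u2' - u1\<bar> < r" "\<gamma> u2' = \<gamma> u2" "normal u2' = normal u2"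
      using \<epsilon> by blast
    moreover have "u1 \<in> window" using u(1) Icc_subset_window by blast
    ultimately show ?thesis using u(2,3,5,6) by metis
  qed
  then show ?thesis using \<open>0 < \<epsilon>\<close> by blast
qed

lemma offset_points_differ:
  assumes "0 < \<delta>"
  shows "\<exists>\<epsilon>>0. \<forall>t1\<in>J. \<forall>t2\<in>J. \<forall>X Y v w.
           norm X = 1 \<and> norm Y = 1 \<and> \<delta> \<le> X \<bullet> normal t1 \<and> \<delta> \<le> Y \<bullet> normal t2 \<and>
           0 < v \<and> v < \<epsilon> \<and> -\<epsilon> < w \<and> w < 0 \<longrightarrow> \<gamma> t1 + v *\<^sub>R X \<noteq> \<gamma> t2 + w *\<^sub>R Y"
proof -
  obtain M where M: "0 < M" "\<And>t. t \<in> window \<Longrightarrow> norm (\<gamma>'' t) \<le> M"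
    using curvature_bounded_on_window by blast
  obtain r0 where "0 < r0" and r0: "\<And>t t'. t \<in> window \<Longrightarrow> t' \<in> window \<Longrightarrow> dist t' t < r0 \<Longrightarrow>
      dist (normal t') (normal t) < \<delta> / 2"
    using compact_uniformly_continuous[OF continuous_on_subset[OF continuous_normal window_subset_J]
        compact_window] assms
    unfolding uniformly_continuous_on_def by (meson half_gt_zero)
  define r where "r = min r0 (1 / (2 * M))"
  have "0 < r" using \<open>0 < r0\<close> M(1) by (simp add: r_def)
  then obtain \<epsilon>1 where "0 < \<epsilon>1" and \<epsilon>1: "\<forall>t1\<in>J. \<forall>t2\<in>J. dist (\<gamma> t1) (\<gamma> t2) < \<epsilon>1 \<longrightarrow>
      (\<exists>u1\<in>window. \<exists>u2\<in>window. \<bar>u2 - u1\<bar> < r \<and>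
         \<gamma> u1 = \<gamma> t1 \<and> normal u1 = normal t1 \<and> \<gamma> u2 = \<gamma> t2 \<and> normal u2 = normal t2)"
    using close_points_nearby_representatives by blast
  define \<epsilon> where "\<epsilon> = min (\<epsilon>1 / 2) (\<delta> / (16 * M))"
  have "0 < \<epsilon>" "2 * \<epsilon> \<le> \<epsilon>1" "16 * M * \<epsilon> \<le> \<delta>"
    using \<open>0 < \<epsilon>1\<close> assms M(1) by (auto simp: \<epsilon>_def min_def field_simps)
  have "\<gamma> t1 + v *\<^sub>R X \<noteq> \<gamma> t2 + w *\<^sub>R Y"
    if t: "t1 \<in> J" "t2 \<in> J" and X: "norm X = 1" "\<delta> \<le> X \<bullet> normal t1"
      and Y: "norm Y = 1" "\<delta> \<le> Y \<bullet> normal t2"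
      and v: "0 < v" "v < \<epsilon>" and w: "-\<epsilon> < w" "w < 0" for t1 t2 X Y v w
  proof
    assume meet: "\<gamma> t1 + v *\<^sub>R X = \<gamma> t2 + w *\<^sub>R Y"
    then have "\<gamma> t1 = \<gamma> t2 + w *\<^sub>R Y - v *\<^sub>R X"
      by (simp add: eq_diff_eq)
    then have "dist (\<gamma> t1) (\<gamma> t2) = norm (w *\<^sub>R Y - v *\<^sub>R X)"
      by (simp add: dist_norm)
    also have "\<dots> \<le> \<bar>w\<bar> + \<bar>v\<bar>"
      using norm_triangle_ineq4[of "w *\<^sub>R Y" "v *\<^sub>R X"] X Y by simp
    also have "\<dots> < \<epsilon>1" using v w \<open>2 * \<epsilon> \<le> \<epsilon>1\<close> by simp
    finally obtain u1 u2 where u: "u1 \<in> window" "u2 \<in> window" "\<bar>u2 - u1\<bar> < r"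
      "\<gamma> u1 = \<gamma> t1" "normal u1 = normal t1" "\<gamma> u2 = \<gamma> t2" "normal u2 = normal t2"
      using \<epsilon>1 t by blast
    have "u1 \<in> J" using u(1) window_subset_J by blast
    have "dist (normal u2) (normal u1) < \<delta> / 2"
      using r0[OF u(1,2)] u(3) by (simp add: dist_real_def r_def)
    moreover have "\<delta> \<le> Y \<bullet> normal u2" using Y(2) u(7) by simp
    ultimately have "\<delta> - \<delta> / 2 \<le> Y \<bullet> normal u1" by (rule inner_lower_bound_perturb[OF Y(1)])
    then have "\<delta> / 2 \<le> Y \<bullet> normal u1" by simp
    moreover have "\<bar>u2 - u1\<bar> \<le> 1 / (2 * M)" using u(3) by (simp add: r_def)
    moreover have "\<delta> \<le> X \<bullet> normal u1" using X(2) u(5) by simp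
    moreover have "\<gamma> u1 + v *\<^sub>R X = \<gamma> u2 + w *\<^sub>R Y" using meet u by simp
    ultimately show False
      using offsets_towards_normal_differ[OF convex_window u(1,2)
          has_derivative_\<gamma>[OF subsetD[OF window_subset_J]] has_derivative_\<gamma>'[OF subsetD[OF window_subset_J]] M(2,1)]
        unit_speed[OF \<open>u1 \<in> J\<close>] tangent_orthogonal_normal[OF \<open>u1 \<in> J\<close>] norm_normal[OF \<open>u1 \<in> J\<close>]
        X(1) Y(1) v w \<open>16 * M * \<epsilon> \<le> \<delta>\<close> by simp
  qed
  then show ?thesis using \<open>0 < \<epsilon>\<close> by blast
qed

lemma reparametrization_derivatives:
  assumes \<sigma>: "\<sigma> = 1 \<or> \<sigma> = -1" and a: "\<not> cl \<longrightarrow> a = 0"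
    and c: "\<And>s. s \<in> J \<Longrightarrow> c s = \<gamma> (\<sigma> * s + a)"
    and U: "open U" "J \<subseteq> U" "smooth_on U c" and s: "s \<in> J"
  shows "deriv1 c s = \<sigma> *\<^sub>R \<gamma>' (\<sigma> * s + a)" "deriv2 c s = \<gamma>'' (\<sigma> * s + a)"
proof -
  obtain c' c'' where c': "\<And>t. t \<in> U \<Longrightarrow> (c has_vector_derivative c' t) (at t)"
    and c'': "\<And>t. t \<in> U \<Longrightarrow> (c' has_vector_derivative c'' t) (at t)"
    and cont_U: "continuous_on U c'" "continuous_on U c''"
    and deriv: "\<And>t. t \<in> U \<Longrightarrow> deriv1 c t = c' t" "\<And>t. t \<in> U \<Longrightarrow> deriv2 c t = c'' t"
    using smooth_on_derivatives[OF U(3,1)] by metis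
  note cont = continuous_on_subset[OF cont_U(1) U(2)] continuous_on_subset[OF cont_U(2) U(2)]
  note J_regular = closure_interior_Jset[OF length_pos]
  have aff: "\<sigma> * t + a \<in> J" if "t \<in> J" for t
    using affine_reparam_in_Jset[OF \<sigma> a that] .
  have aff_deriv: "((\<lambda>t. \<sigma> * t + a) has_vector_derivative \<sigma>) (at t)" for t
    by (auto intro!: derivative_eq_intros)
  have cont_aff: "continuous_on J (\<lambda>t. f (\<sigma> * t + a))" if "continuous_on J f" for f :: "real \<Rightarrow> real^3"
    by (rule continuous_on_compose2[OF that]) (auto intro!: continuous_intros aff)
  have c'_eq: "c' t = \<sigma> *\<^sub>R \<gamma>' (\<sigma> * t + a)" if "t \<in> J" for t
  proof (rule has_vector_derivative_unique_on_regular_closed[OF J_regular _ cont(1) _ _ c that])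
    show "(c has_vector_derivative c' t) (at t)" if "t \<in> J" for t
      using c' U(2) that by blast
    show "((\<lambda>t. \<gamma> (\<sigma> * t + a)) has_vector_derivative \<sigma> *\<^sub>R \<gamma>' (\<sigma> * t + a)) (at t)" if "t \<in> J" for t
      using vector_diff_chain_at[OF aff_deriv has_derivative_\<gamma>[OF aff[OF that]]] by (simp add: o_def)
    show "continuous_on J (\<lambda>t. \<sigma> *\<^sub>R \<gamma>' (\<sigma> * t + a))"
      using cont_aff[OF continuous_\<gamma>'] by (intro continuous_intros)
  qed
  have "c'' s = (\<sigma> * \<sigma>) *\<^sub>R \<gamma>'' (\<sigma> * s + a)"
  proof (rule has_vector_derivative_unique_on_regular_closed[OF J_regular _ cont(2) _ _ c'_eq s])
    show "(c' has_vector_derivative c'' t) (at t)" if "t \<in> J" for t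
      using c'' U(2) that by blast
    show "((\<lambda>t. \<sigma> *\<^sub>R \<gamma>' (\<sigma> * t + a)) has_vector_derivative (\<sigma> * \<sigma>) *\<^sub>R \<gamma>'' (\<sigma> * t + a)) (at t)"
      if "t \<in> J" for t
      using bounded_linear.has_vector_derivative[OF bounded_linear_scaleR_right[of \<sigma>]
          vector_diff_chain_at[OF aff_deriv has_derivative_\<gamma>'[OF aff[OF that]]]]
      by (simp add: o_def)
    show "continuous_on J (\<lambda>t. (\<sigma> * \<sigma>) *\<^sub>R \<gamma>'' (\<sigma> * t + a))"
      using cont_aff[OF continuous_\<gamma>''] by (intro continuous_intros)
  qed
  then show "deriv1 c s = \<sigma> *\<^sub>R \<gamma>' (\<sigma> * s + a)" "deriv2 c s = \<gamma>'' (\<sigma> * s + a)"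
    using deriv U(2) s c'_eq[OF s] \<sigma> by auto
qed

lemma frenet_ruling_inner_normal_pos:
  assumes \<sigma>: "\<sigma> = 1 \<or> \<sigma> = -1" and a: "\<not> cl \<longrightarrow> a = 0"
    and c: "\<And>s. s \<in> J \<Longrightarrow> c s = \<gamma> (\<sigma> * s + a)"
    and U: "open U" "J \<subseteq> U" "smooth_on U c" and s: "s \<in> J"
    and angles: "0 < \<bar>\<alpha>\<bar>" "\<bar>\<alpha>\<bar> < pi / 2" "0 < \<beta>" "\<beta> < pi"
  shows "0 < (cos \<beta> *\<^sub>R frenet_e c s
              + sin \<beta> *\<^sub>R (cos \<alpha> *\<^sub>R frenet_n c s + sin \<alpha> *\<^sub>R frenet_b c s)) \<bullet> normal (\<sigma> * s + a)"
proof -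
  let ?t = "\<sigma> * s + a"
  have t: "?t \<in> J" using affine_reparam_in_Jset[OF \<sigma> a s] .
  have e: "frenet_e c s = \<sigma> *\<^sub>R \<gamma>' ?t" and n: "frenet_n c s = normal ?t"
    using reparametrization_derivatives[OF \<sigma> a c U s]
    by (simp_all add: frenet_e_def frenet_n_def normal_def sgn_div_norm inverse_eq_divide)
  have "(\<sigma> *\<^sub>R \<gamma>' ?t) \<bullet> normal ?t = 0"
    using tangent_orthogonal_normal[OF t] by simp
  from frenet_combination_inner_normal_pos[OF this norm_normal[OF t] angles]
  show ?thesis unfolding frenet_b_def e n .
qed

lemma periodic_normal_reparam:
  assumes "cl" "\<sigma> = 1 \<or> \<sigma> = -1"
  shows "normal (\<sigma> * (s + l) + a) = normal (\<sigma> * s + a)"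
  using assms(2) periodic_normal[OF assms(1), of "\<sigma> * s + a"]
    periodic_normal[OF assms(1), of "\<sigma> * s + a - l"]
  by (auto simp: algebra_simps)

definition ruling_towards_normal :: "real \<Rightarrow> (real \<Rightarrow> real^3) \<Rightarrow> (real \<Rightarrow> real^3) \<Rightarrow> bool" where
  "ruling_towards_normal \<delta> c \<xi> \<longleftrightarrow>
     (\<forall>s\<in>J. \<exists>t\<in>J. c s = \<gamma> t \<and> norm (\<xi> s) = 1 \<and> \<delta> \<le> \<xi> s \<bullet> normal t)"

lemma ruling_towards_normal_mono:
  "ruling_towards_normal \<delta> c \<xi> \<Longrightarrow> \<delta>' \<le> \<delta> \<Longrightarrow> ruling_towards_normal \<delta>' c \<xi>"
  unfolding ruling_towards_normal_def by (meson order_trans)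

lemma normal_form_strip_ruling_towards_normal:
  assumes "normal_form_strip cl l \<gamma> c \<xi>"
  obtains \<delta> where "0 < \<delta>" "ruling_towards_normal \<delta> c \<xi>"
proof -
  note nf = assms[unfolded normal_form_strip_def]
  from nf obtain \<sigma> a where \<sigma>: "\<sigma> = 1 \<or> \<sigma> = -1" and a: "\<not> cl \<longrightarrow> a = 0"
    and c: "\<forall>s\<in>J. c s = \<gamma> (\<sigma> * s + a)"
    by blast
  from nf obtain U where U: "open U" "J \<subseteq> U" "smooth_on U c" "smooth_on U \<xi>"
    by blast
  from nf obtain \<alpha> \<beta> where frame: "\<forall>s\<in>J.
      \<xi> s = cos (\<beta> s) *\<^sub>R frenet_e c s
             + sin (\<beta> s) *\<^sub>R (cos (\<alpha> s) *\<^sub>R frenet_n c s + sin (\<alpha> s) *\<^sub>R frenet_b c s) \<and>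
      0 < \<bar>\<alpha> s\<bar> \<and> \<bar>\<alpha> s\<bar> < pi / 2 \<and> 0 < \<beta> s \<and> \<beta> s < pi"
    by blast
  have periodic_\<xi>: "\<xi> (s + l) = \<xi> s" if cl for s
    using nf that by blast
  have unit_\<xi>: "norm (\<xi> s) = 1" if "s \<in> J" for s
    using nf that by blast
  have aff: "\<sigma> * s + a \<in> J" if "s \<in> J" for s
    using affine_reparam_in_Jset[OF \<sigma> a that] .
  define q where "q s = \<xi> s \<bullet> normal (\<sigma> * s + a)" for s
  have "0 < q s" if s: "s \<in> J" for s
    using frenet_ruling_inner_normal_pos[OF \<sigma> a _ U(1-3) s] c frame s unfolding q_def by auto
  moreover have "continuous_on J q"
  proof -
    have "continuous_on U \<xi>"
      using smooth_on_continuous_on[OF U(4)] .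
    moreover have "continuous_on J (\<lambda>s. normal (\<sigma> * s + a))"
      by (rule continuous_on_compose2[OF continuous_normal]) (auto intro!: continuous_intros aff)
    ultimately show ?thesis
      unfolding q_def using continuous_on_subset[OF _ U(2)] by (auto intro!: continuous_intros)
  qed
  moreover have "\<forall>s. q (s + l) = q s" if cl
    using periodic_normal_reparam[OF that \<sigma>] periodic_\<xi>[OF that] by (simp add: q_def)
  ultimately obtain \<delta> where "0 < \<delta>" "\<forall>s\<in>J. \<delta> \<le> q s"
    using Jset_uniform_lower_bound[OF length_pos] by blast
  then show ?thesis
    using that c unit_\<xi> aff unfolding ruling_towards_normal_def q_def by blast
qed

lemma ruled_strips_disjoint:
  assumes "0 < \<delta>" "ruling_towards_normal \<delta> cF \<xi>F" "ruling_towards_normal \<delta> cG \<xi>G"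
  shows "\<exists>\<epsilon>0>0. \<forall>\<epsilon>. 0 < \<epsilon> \<and> \<epsilon> \<le> \<epsilon>0 \<longrightarrow>
           ruled cF \<xi>F ` Omega_plus cl l \<epsilon> \<inter> ruled cG \<xi>G ` Omega_minus cl l \<epsilon> = {}"
proof -
  obtain \<epsilon>0 where "0 < \<epsilon>0" and differ: "\<forall>t1\<in>J. \<forall>t2\<in>J. \<forall>X Y v w.
      norm X = 1 \<and> norm Y = 1 \<and> \<delta> \<le> X \<bullet> normal t1 \<and> \<delta> \<le> Y \<bullet> normal t2 \<and>
      0 < v \<and> v < \<epsilon>0 \<and> -\<epsilon>0 < w \<and> w < 0 \<longrightarrow> \<gamma> t1 + v *\<^sub>R X \<noteq> \<gamma> t2 + w *\<^sub>R Y"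
    using offset_points_differ[OF assms(1)] by blast
  have "cF s + v *\<^sub>R \<xi>F s \<noteq> cG s' + w *\<^sub>R \<xi>G s'"
    if "s \<in> J" "s' \<in> J" "0 < v" "v < \<epsilon>0" "-\<epsilon>0 < w" "w < 0" for s s' v w
    using assms(2,3) that differ unfolding ruling_towards_normal_def by metis
  then show ?thesis
    using \<open>0 < \<epsilon>0\<close> unfolding Omega_plus_def Omega_minus_def ruled_def
    by (intro exI[of _ \<epsilon>0]) fastforce
qed

end

lemma embedded_curve_arclength_curve:
  assumes "embedded_curve cl l \<gamma>"
  obtains \<gamma>' \<gamma>'' where "arclength_curve cl l \<gamma> \<gamma>' \<gamma>''"
proof -
  note curve = assms[unfolded embedded_curve_def]
  from curve obtain U where U: "open U" "Jset cl l \<subseteq> U" "smooth_on U \<gamma>"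
    by blast
  obtain \<gamma>' \<gamma>'' where \<gamma>': "\<And>t. t \<in> U \<Longrightarrow> (\<gamma> has_vector_derivative \<gamma>' t) (at t)"
    and \<gamma>'': "\<And>t. t \<in> U \<Longrightarrow> (\<gamma>' has_vector_derivative \<gamma>'' t) (at t)"
    and "continuous_on U \<gamma>'" and cont: "continuous_on U \<gamma>''"
    and deriv: "\<And>t. t \<in> U \<Longrightarrow> deriv1 \<gamma> t = \<gamma>' t" "\<And>t. t \<in> U \<Longrightarrow> deriv2 \<gamma> t = \<gamma>'' t"
    using smooth_on_derivatives[OF U(3,1)] by metis
  have unit: "\<forall>s\<in>Jset cl l. norm (deriv1 \<gamma> s) = 1" and curved: "\<forall>s\<in>Jset cl l. deriv2 \<gamma> s \<noteq> 0"
    using curve by blast+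
  show ?thesis
  proof (rule that, unfold_locales)
    fix t assume t: "t \<in> Jset cl l"
    then have "t \<in> U" using U(2) by blast
    then show "(\<gamma> has_vector_derivative \<gamma>' t) (at t)" "(\<gamma>' has_vector_derivative \<gamma>'' t) (at t)"
      "norm (\<gamma>' t) = 1" "\<gamma>'' t \<noteq> 0"
      using \<gamma>' \<gamma>'' deriv unit[rule_format, OF t] curved[rule_format, OF t] by simp_all
  next
    show "continuous_on (Jset cl l) \<gamma>''"
      using continuous_on_subset[OF cont U(2)] .
  qed (use curve in auto)
qed

theorem proposition1p11:
  fixes cl :: bool and l :: real
    and \<gamma> cF \<xi>F cG \<xi>G :: "real \<Rightarrow> real^3"
  assumes "embedded_curve cl l \<gamma>"
    and "normal_form_strip cl l \<gamma> cF \<xi>F"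
    and "normal_form_strip cl l \<gamma> cG \<xi>G"
  shows "\<exists>\<epsilon>0>0. \<forall>\<epsilon>. 0 < \<epsilon> \<and> \<epsilon> \<le> \<epsilon>0 \<longrightarrow>
           ruled cF \<xi>F ` Omega_plus cl l \<epsilon> \<inter> ruled cG \<xi>G ` Omega_minus cl l \<epsilon> = {}"
proof -
  obtain \<gamma>' \<gamma>'' where "arclength_curve cl l \<gamma> \<gamma>' \<gamma>''"
    using embedded_curve_arclength_curve[OF assms(1)] .
  then interpret arclength_curve cl l \<gamma> \<gamma>' \<gamma>'' .
  obtain \<delta>F \<delta>G where "0 < \<delta>F" "ruling_towards_normal \<delta>F cF \<xi>F"
    and "0 < \<delta>G" "ruling_towards_normal \<delta>G cG \<xi>G"
    using normal_form_strip_ruling_towards_normal assms(2,3) by metis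
  then show ?thesis
    by (intro ruled_strips_disjoint[of "min \<delta>F \<delta>G"]) (auto elim: ruling_towards_normal_mono)
qed

end
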